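(* Let $\Pi_n$ be a standard PARITY$_n$ program such that no rule $y\leftarrow B$ of $\Pi_n$ has $y\in var(B)$ and every rule body of $\Pi_n$ is consistent. If $x\leftarrow B\in\Pi_n$ (with $x$ a variable) and $S(B\cup\{x\})=\{J\}$ for a single string $J$, then $J$ is an odd string.
   Context: A rule element is one of $\top$, $\bot$, $x$, $not\ x$, $not\ not\ x$, where $x$ is a variable. A (canonical) rule is $H\leftarrow B$ with $H$ a variable or $\bot$ and $B$ a finite set of rule elements; a canonical program is a finite set of rules. For a body $B$, $var(B)=\{e\in B: e\text{ is a variable}\}$. For a set of variables $I$: $I\models\top$; $I\not\models\bot$; $I\models x$ iff $I\models not\ not\ x$ iff $x\in I$; $I\models not\ x$ iff $x\notin I$; $I\models B$ iff $I$ satisfies every element of $B$; $I$ is closed under $H\leftarrow B$ if $I\models B$ implies $I\models H$. The reduct $\Pi^I$ replaces $not\ not\ x$ by $\top$ if $x\in I$ else $\bot$, and $not\ x$ by $\top$ if $x\notin I$ else $\bot$; $I$ is an answer set of $\Pi$ if $I$ is the least set closed under all rules of $\Pi^I$; $Ans(\Pi)$ is the set of answer sets; $var(\Pi)$ the set of variables occurring in $\Pi$. Strings $w\in\{0,1\}^n$ are identified with $\{x_i:w_i=1\}$; PARITY$_n$ is the set of strings in $\{0,1\}^n$ with an odd number of 1's (odd strings); a PARITY$_n$ program is a canonical program $\Pi$ with $var(\Pi)=\{x_1,\dots,x_n\}$ and $Ans(\Pi)=$ PARITY$_n$. For a set $B$ of rule elements, $S(B)=\{I\subseteq\{x_1,\dots,x_n\}: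 I\models B\}$; $B$ is consistent if $S(B)\neq\emptyset$. A PARITY$_n$ program $\Pi$ is standard if for every rule $x\leftarrow B\in\Pi$ with head a variable $x$: whenever $S(B\cup\{x\})$ has exactly one element, $not\ not\ x\notin B$. *)

theory Defs
  imports Main
begin

text \<open>Variables are natural numbers; the variable x_i is represented by i.\<close>

datatype elem = ETop | EBot | EPos nat | ENeg nat | ENNeg nat

datatype head = HVar nat | HBot

type_synonym rule = "head \<times> elem set"
type_synonym program = "rule set"

fun sat_elem :: "nat set \<Rightarrow> elem \<Rightarrow> bool" where
  "sat_elem I ETop = True"
| "sat_elem I EBot = False"
| "sat_elem I (EPos x) = (x \<in> I)"
| "sat_elem I (ENeg x) = (x \<notin> I)"
| "sat_elem I (ENNeg x) = (x \<in> I)"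

definition sat_body :: "nat set \<Rightarrow> elem set \<Rightarrow> bool" where
  "sat_body I B = (\<forall>e\<in>B. sat_elem I e)"

fun sat_head :: "nat set \<Rightarrow> head \<Rightarrow> bool" where
  "sat_head I (HVar x) = (x \<in> I)"
| "sat_head I HBot = False"

definition closed_rule :: "nat set \<Rightarrow> rule \<Rightarrow> bool" where
  "closed_rule I r = (sat_body I (snd r) \<longrightarrow> sat_head I (fst r))"

fun reduct_elem :: "nat set \<Rightarrow> elem \<Rightarrow> elem" where
  "reduct_elem I (ENNeg x) = (if x \<in> I then ETop else EBot)"
| "reduct_elem I (ENeg x) = (if x \<notin> I then ETop else EBot)"
| "reduct_elem I e = e"

definition reduct :: "program \<Rightarrow> nat set \<Rightarrow> program" where
  "reduct P I = (\<lambda>(h, B). (h, reduct_elem I ` B)) ` P"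

definition closed_prog :: "nat set \<Rightarrow> program \<Rightarrow> bool" where
  "closed_prog I P = (\<forall>r\<in>P. closed_rule I r)"

definition answer_set :: "program \<Rightarrow> nat set \<Rightarrow> bool" where
  "answer_set P I = (closed_prog I (reduct P I) \<and>
       (\<forall>J. closed_prog J (reduct P I) \<longrightarrow> I \<subseteq> J))"

definition Ans :: "program \<Rightarrow> nat set set" where
  "Ans P = {I. answer_set P I}"

fun elem_vars :: "elem \<Rightarrow> nat set" where
  "elem_vars (EPos x) = {x}"
| "elem_vars (ENeg x) = {x}"
| "elem_vars (ENNeg x) = {x}"
| "elem_vars _ = {}"

fun head_vars :: "head \<Rightarrow> nat set" where
  "head_vars (HVar x) = {x}"
| "head_vars HBot = {}"

definition prog_vars :: "program \<Rightarrow> nat set" where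
  "prog_vars P = (\<Union>(h, B)\<in>P. head_vars h \<union> (\<Union>e\<in>B. elem_vars e))"

definition canonical_program :: "program \<Rightarrow> bool" where
  "canonical_program P = (finite P \<and> (\<forall>r\<in>P. finite (snd r)))"

text \<open>Strings in {0,1}^n identified with subsets of {1..n}; PARITY_n = odd strings.\<close>
definition PARITY :: "nat \<Rightarrow> nat set set" where
  "PARITY n = {I. I \<subseteq> {1..n} \<and> odd (card I)}"

definition parity_program :: "nat \<Rightarrow> program \<Rightarrow> bool" where
  "parity_program n P = (canonical_program P \<and> prog_vars P = {1..n} \<and> Ans P = PARITY n)"

definition S :: "nat \<Rightarrow> elem set \<Rightarrow> nat set set" where
  "S n B = {I. I \<subseteq> {1..n} \<and> sat_body I B}"

definition consistent :: "nat \<Rightarrow> elem set \<Rightarrow> bool" where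
  "consistent n B = (S n B \<noteq> {})"

definition standard :: "nat \<Rightarrow> program \<Rightarrow> bool" where
  "standard n P = (parity_program n P \<and>
     (\<forall>x B. (HVar x, B) \<in> P \<longrightarrow> card (S n (insert (EPos x) B)) = 1 \<longrightarrow> ENNeg x \<notin> B))"

end

theory Submission
  imports Defs
begin

text \<open>Suppose the unique model J of B \<union> {x} were even. Since the standard condition and the
  absence of x from B leave only literals not mentioning x in B (the literal not x is ruled out
  by x \<in> J), the odd string J - {x} still satisfies B. Being an answer set, J - {x} is a model of
  the reduct, which contains x \<leftarrow> B' with B' still satisfied; hence x \<in> J - {x}, absurd.\<close>

lemma sat_elem_reduct_elem: "sat_elem I e \<Longrightarrow> sat_elem I (reduct_elem I e)"
  by (cases e) auto

lemma sat_body_reduct: "sat_body I B \<Longrightarrow> sat_body I (reduct_elem I ` B)"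
  using sat_elem_reduct_elem unfolding sat_body_def by blast

lemma answer_set_sat_head:
  assumes "answer_set P I" and "(h, B) \<in> P" and "sat_body I B"
  shows "sat_head I h"
proof -
  have "(h, reduct_elem I ` B) \<in> reduct P I"
    using assms(2) unfolding reduct_def by force
  then have "closed_rule I (h, reduct_elem I ` B)"
    using assms(1) unfolding answer_set_def closed_prog_def by blast
  then show ?thesis
    using sat_body_reduct[OF assms(3)] unfolding closed_rule_def by simp
qed

lemma sat_elem_Diff_singleton: "x \<notin> elem_vars e \<Longrightarrow> sat_elem (I - {x}) e = sat_elem I e"
  by (cases e) auto

lemma sat_body_Diff_singleton:
  "(\<forall>e\<in>B. x \<notin> elem_vars e) \<Longrightarrow> sat_body (I - {x}) B = sat_body I B"
  using sat_elem_Diff_singleton unfolding sat_body_def by blast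

lemma var_not_in_satisfied_body:
  assumes "sat_body I B" and "x \<in> I" and "EPos x \<notin> B" and "ENNeg x \<notin> B"
  shows "\<forall>e\<in>B. x \<notin> elem_vars e"
proof
  fix e assume "e \<in> B"
  with assms show "x \<notin> elem_vars e"
    unfolding sat_body_def by (cases e) auto
qed

lemma Diff_singleton_in_PARITY:
  assumes "J \<subseteq> {1..n}" and "x \<in> J" and "J \<notin> PARITY n"
  shows "J - {x} \<in> PARITY n"
proof -
  have "finite J" using assms(1) finite_subset by blast
  then have "card J = Suc (card (J - {x}))"
    using assms(2) by (rule card_Suc_Diff1[symmetric])
  moreover have "even (card J)"
    using assms(1,3) unfolding PARITY_def by blast
  ultimately have "odd (card (J - {x}))" by simp
  then show ?thesis
    using assms(1) unfolding PARITY_def by blast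
qed

theorem mainTheorem14:
  fixes n :: nat and P :: program
  assumes "standard n P"
    and "\<forall>y B. (HVar y, B) \<in> P \<longrightarrow> EPos y \<notin> B"
    and "\<forall>h B. (h, B) \<in> P \<longrightarrow> consistent n B"
    and "(HVar x, B) \<in> P"
    and "S n (insert (EPos x) B) = {J}"
  shows "J \<in> PARITY n"
proof (rule ccontr)
  assume J_even: "J \<notin> PARITY n"
  have "J \<in> S n (insert (EPos x) B)"
    using assms(5) by simp
  then have J: "J \<subseteq> {1..n}" "x \<in> J" "sat_body J B"
    unfolding S_def sat_body_def by simp_all
  have "card (S n (insert (EPos x) B)) = 1"
    using assms(5) by simp
  then have "ENNeg x \<notin> B"
    using assms(1,4) unfolding standard_def by blast
  moreover have "EPos x \<notin> B"
    using assms(2,4) by blast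
  ultimately have "sat_body (J - {x}) B"
    using J(3) sat_body_Diff_singleton var_not_in_satisfied_body[OF J(3,2)] by simp
  moreover have "answer_set P (J - {x})"
    using Diff_singleton_in_PARITY[OF J(1,2) J_even] assms(1)
    unfolding standard_def parity_program_def Ans_def by blast
  ultimately have "sat_head (J - {x}) (HVar x)"
    using answer_set_sat_head assms(4) by blast
  then show False by simp
qed

end
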